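(* Let $n\ge2$ be an integer, $\sigma\ge0$, $R'>0$, and define $a_1=\frac{n}{2R'}$, $a_2=\frac{a_1}{n-1}$, $a_k=\min\big\{(1+\frac1{n-1})a_{k-1},\frac{\sqrt{n(n+\sigma A_{k-1})}}{2R'}\big\}$ for $k\ge3$, where $A_k=\sum_{i=1}^ka_i$. Let $k_0=\big\lceil\frac{\log B_{n,\sigma,R'}}{\log n-\log(n-1)}\big\rceil$ with $B_{n,\sigma,R'}=\frac{\sigma n(n-1)}{4R'}+\sqrt{(\frac{\sigma n(n-1)}{4R'})^2+n^2}$. Then for all $k>k_0$, $A_k\ge c(k-k_0+n-1)^2$, where $c=\frac{(n-1)^2\sigma}{(4R')^2n}$. *)

theory Defs
  imports Complex_Main
begin

text \<open>acc n \<sigma> R k = (a_(k+1), A_(k+1)), computing the sequence a_k together with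
  its partial sums A_k, as in the paper.\<close>
primrec acc :: "nat \<Rightarrow> real \<Rightarrow> real \<Rightarrow> nat \<Rightarrow> real \<times> real" where
  "acc n \<sigma> R 0 = (real n / (2 * R), real n / (2 * R))"
| "acc n \<sigma> R (Suc k) =
     (let ak = fst (acc n \<sigma> R k); Ak = snd (acc n \<sigma> R k);
          a' = (if k = 0 then ak / (real n - 1)
                else min ((1 + 1 / (real n - 1)) * ak)
                         (sqrt (real n * (real n + \<sigma> * Ak)) / (2 * R)))
      in (a', Ak + a'))"

text \<open>The sequence a_k (k \<ge> 1); a_0 is unused and set to 0.\<close>
definition seq_a :: "nat \<Rightarrow> real \<Rightarrow> real \<Rightarrow> nat \<Rightarrow> real" where
  "seq_a n \<sigma> R k = (if k = 0 then 0 else fst (acc n \<sigma> R (k - 1)))"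

definition seq_A :: "nat \<Rightarrow> real \<Rightarrow> real \<Rightarrow> nat \<Rightarrow> real" where
  "seq_A n \<sigma> R k = (\<Sum>i\<in>{1..k}. seq_a n \<sigma> R i)"

definition B_const :: "nat \<Rightarrow> real \<Rightarrow> real \<Rightarrow> real" where
  "B_const n \<sigma> R = \<sigma> * real n * (real n - 1) / (4 * R)
     + sqrt ((\<sigma> * real n * (real n - 1) / (4 * R))^2 + (real n)^2)"

definition k0_const :: "nat \<Rightarrow> real \<Rightarrow> real \<Rightarrow> int" where
  "k0_const n \<sigma> R = \<lceil>ln (B_const n \<sigma> R) / (ln (real n) - ln (real n - 1))\<rceil>"

definition c_const :: "nat \<Rightarrow> real \<Rightarrow> real \<Rightarrow> real" where
  "c_const n \<sigma> R = (real n - 1)^2 * \<sigma> / ((4 * R)^2 * real n)"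

end

theory Submission
  imports Defs
begin

text \<open>
  Write r = n/(n-1), s = sigma n (n-1)/(4R') and B = s + sqrt (s^2 + n^2), the positive root of
  x^2 = 2 s x + n^2. As long as r^(k-1) <= B, the minimum in the recursion is the geometric term,
  so a_k = r^(k-1)/(2R') and A_k = (n-1) r^k/(2R'); the radicand n (n + sigma A_k) is then
  n^2 + 2 s r^k. The index k0 is the first one with B <= r^k0, and a_(k0+1) >= B/(2R').
  From there on, with m = k - k0 + n - 1 and e = (n-1) sigma/(8R'^2), the bounds A_k >= c m^2 and
  a_k >= e (m-1) propagate: the square-root term is at least e m since n sigma c m^2 = (2R' e m)^2,
  the geometric term r e (m-1) is at least e m since m >= n, and c m^2 + e m >= c (m+1)^2
  since 2m >= n-1.
\<close>

lemma quadratic_root_sq: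
  fixes s m :: real
  shows "(s + sqrt (s\<^sup>2 + m\<^sup>2))\<^sup>2 = m\<^sup>2 + 2 * s * (s + sqrt (s\<^sup>2 + m\<^sup>2))"
  by (simp add: power2_eq_square algebra_simps)

lemma le_sqrt_iff_le_quadratic_root:
  fixes s m x :: real
  assumes "m \<noteq> 0" and "0 \<le> x"
  shows "x \<le> sqrt (m\<^sup>2 + 2 * s * x) \<longleftrightarrow> x \<le> s + sqrt (s\<^sup>2 + m\<^sup>2)"
proof -
  let ?B = "s + sqrt (s\<^sup>2 + m\<^sup>2)"
  have "\<bar>s\<bar> < sqrt (s\<^sup>2 + m\<^sup>2)"
    using assms(1) real_sqrt_less_mono[of "s\<^sup>2" "s\<^sup>2 + m\<^sup>2"] by simp
  then have other_root_neg: "0 < x + ?B - 2 * s"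
    using assms(2) by linarith
  have "x\<^sup>2 - (m\<^sup>2 + 2 * s * x) = (x - ?B) * (x + ?B - 2 * s)"
    using quadratic_root_sq[of s m] by (simp add: power2_eq_square algebra_simps)
  then have "x\<^sup>2 \<le> m\<^sup>2 + 2 * s * x \<longleftrightarrow> x \<le> ?B"
    using other_root_neg by (smt (verit) mult_le_0_iff)
  moreover have "x \<le> sqrt (m\<^sup>2 + 2 * s * x) \<longleftrightarrow> x\<^sup>2 \<le> m\<^sup>2 + 2 * s * x"
    using assms(2) by (metis abs_of_nonneg real_le_rsqrt sqrt_ge_absD)
  ultimately show ?thesis
    by simp
qed

lemma quadratic_root_le_sqrt:
  fixes s m x :: real
  assumes "0 \<le> s" and "s + sqrt (s\<^sup>2 + m\<^sup>2) \<le> x"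
  shows "s + sqrt (s\<^sup>2 + m\<^sup>2) \<le> sqrt (m\<^sup>2 + 2 * s * x)"
proof -
  have "s + sqrt (s\<^sup>2 + m\<^sup>2) = sqrt (m\<^sup>2 + 2 * s * (s + sqrt (s\<^sup>2 + m\<^sup>2)))"
    using quadratic_root_sq[of s m] assms(1) by (simp add: real_sqrt_unique)
  also have "\<dots> \<le> sqrt (m\<^sup>2 + 2 * s * x)"
    using assms by (simp add: mult_left_mono)
  finally show ?thesis .
qed

lemma ceiling_log_bracket:
  fixes b x :: real
  assumes "1 < b" and "b < x"
  shows "2 \<le> \<lceil>log b x\<rceil>" and "b ^ (nat \<lceil>log b x\<rceil> - 1) < x" and "x \<le> b ^ nat \<lceil>log b x\<rceil>"
proof -
  have "1 < log b x"
    using assms by (simp add: less_log_iff)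
  then show ge2: "2 \<le> \<lceil>log b x\<rceil>"
    by linarith
  define k where "k = nat \<lceil>log b x\<rceil> - 1"
  have "\<lceil>log b x\<rceil> = int k + 1"
    using ge2 unfolding k_def by linarith
  then have "b powr k < x \<and> x \<le> b powr (k + 1)"
    using assms by (subst (asm) ceiling_log_eq_powr_iff) auto
  moreover have "nat \<lceil>log b x\<rceil> = k + 1"
    using ge2 unfolding k_def by linarith
  ultimately show "b ^ (nat \<lceil>log b x\<rceil> - 1) < x" and "x \<le> b ^ nat \<lceil>log b x\<rceil>"
    using assms(1) by (simp_all add: powr_realpow flip: of_nat_Suc)
qed

lemma seq_A_Suc: "seq_A n \<sigma> R (Suc k) = seq_A n \<sigma> R k + seq_a n \<sigma> R (Suc k)"
  unfolding seq_A_def by simp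

lemma snd_acc_eq_seq_A: "snd (acc n \<sigma> R k) = seq_A n \<sigma> R (Suc k)"
proof (induction k)
  case 0
  then show ?case
    by (simp add: seq_A_def seq_a_def)
next
  case (Suc k)
  then show ?case
    by (simp add: seq_A_Suc[of _ _ _ "Suc k"] seq_a_def Let_def)
qed

lemma seq_a_1: "seq_a n \<sigma> R 1 = real n / (2 * R)"
  by (simp add: seq_a_def)

lemma seq_a_2: "seq_a n \<sigma> R 2 = real n / (2 * R) / (real n - 1)"
  by (simp add: seq_a_def numeral_2_eq_2 Let_def)

lemma seq_a_Suc:
  assumes "2 \<le> k"
  shows "seq_a n \<sigma> R (Suc k) =
    min ((1 + 1 / (real n - 1)) * seq_a n \<sigma> R k)
        (sqrt (real n * (real n + \<sigma> * seq_A n \<sigma> R k)) / (2 * R))"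
proof -
  obtain j where "k = Suc j" and "j \<noteq> 0"
    using assms by (cases k) auto
  then show ?thesis
    by (simp add: seq_a_def Let_def snd_acc_eq_seq_A)
qed

(* The hypothesis on sigma is needed: sqrt of a negative real is negative. *)
lemma seq_a_nonneg:
  assumes "0 \<le> \<sigma>" and "0 \<le> R"
  shows "0 \<le> seq_a n \<sigma> R k"
proof (induction k rule: less_induct)
  case (less k)
  have factor_nonneg: "0 \<le> 1 + 1 / (real n - 1)"
    by (cases n) auto
  show ?case
  proof (cases "k \<le> 2")
    case True
    then have "k = 0 \<or> k = 1 \<or> k = 2"
      by auto
    then show ?thesis
      using assms by (cases n) (auto simp: seq_a_def Let_def numeral_2_eq_2)
  next
    case False
    then have "k = Suc (k - 1)" and "2 \<le> k - 1"
      by auto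
    moreover have "0 \<le> seq_A n \<sigma> R (k - 1)"
      unfolding seq_A_def using less by (intro sum_nonneg) auto
    ultimately show ?thesis
      using less[of "k - 1"] factor_nonneg seq_a_Suc[of "k - 1"] assms by simp
  qed
qed

lemma seq_A_nonneg: "0 \<le> \<sigma> \<Longrightarrow> 0 \<le> R \<Longrightarrow> 0 \<le> seq_A n \<sigma> R k"
  unfolding seq_A_def by (simp add: seq_a_nonneg sum_nonneg)

definition growth_const :: "nat \<Rightarrow> real \<Rightarrow> real \<Rightarrow> real" where
  "growth_const n \<sigma> R = (real n - 1) * \<sigma> / (8 * R\<^sup>2)"

context
  fixes n :: nat and \<sigma> R :: real
  assumes n_ge_2: "n \<ge> 2" and \<sigma>_nonneg: "\<sigma> \<ge> 0" and R_pos: "R > 0"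
begin

abbreviation ratio :: real where
  "ratio \<equiv> real n / (real n - 1)"

abbreviation shift :: real where
  "shift \<equiv> \<sigma> * real n * (real n - 1) / (4 * R)"

lemma B_const_eq: "B_const n \<sigma> R = shift + sqrt (shift\<^sup>2 + (real n)\<^sup>2)"
  by (simp add: B_const_def)

lemma shift_nonneg: "0 \<le> shift"
  using n_ge_2 \<sigma>_nonneg R_pos by simp

lemma n_minus_1_pos: "0 < real n - 1"
  using n_ge_2 by simp

lemma ratio_gt_1: "1 < ratio"
  using n_ge_2 by simp

lemma seq_a_Suc_ratio:
  "2 \<le> k \<Longrightarrow> seq_a n \<sigma> R (Suc k) =
    min (ratio * seq_a n \<sigma> R k) (sqrt (real n * (real n + \<sigma> * seq_A n \<sigma> R k)) / (2 * R))"
  using n_ge_2 by (simp add: seq_a_Suc field_simps)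

lemma radicand_geometric:
  "real n * (real n + \<sigma> * ((real n - 1) * x / (2 * R))) =
    (real n)\<^sup>2 + 2 * shift * x"
  using R_pos by (simp add: field_simps power2_eq_square)

lemma seq_a_Suc_geometric:
  assumes "2 \<le> k"
    and "seq_a n \<sigma> R k = ratio ^ (k - 1) / (2 * R)"
    and "seq_A n \<sigma> R k = (real n - 1) * ratio ^ k / (2 * R)"
  shows "seq_a n \<sigma> R (Suc k) =
    min (ratio ^ k / (2 * R)) (sqrt ((real n)\<^sup>2 + 2 * shift * ratio ^ k) / (2 * R))"
proof -
  have "ratio * ratio ^ (k - 1) = ratio ^ k"
    using assms(1) by (simp flip: power_Suc)
  then have "ratio * seq_a n \<sigma> R k = ratio ^ k / (2 * R)"
    unfolding assms(2) by simp
  then show ?thesis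
    by (simp only: seq_a_Suc_ratio[OF assms(1)] assms(3) radicand_geometric)
qed

lemma seq_geometric_phase:
  assumes "2 \<le> k" and "ratio ^ (k - 1) \<le> B_const n \<sigma> R"
  shows "seq_a n \<sigma> R k = ratio ^ (k - 1) / (2 * R) \<and>
         seq_A n \<sigma> R k = (real n - 1) * ratio ^ k / (2 * R)"
  using assms
proof (induction k rule: dec_induct)
  case base
  have "seq_A n \<sigma> R 2 = seq_a n \<sigma> R 1 + seq_a n \<sigma> R 2"
    using seq_A_Suc[of n \<sigma> R 0] seq_A_Suc[of n \<sigma> R 1] by (simp add: seq_A_def numeral_2_eq_2)
  also have "\<dots> = real n / (2 * R) + real n / (2 * R) / (real n - 1)"
    by (simp only: seq_a_1 seq_a_2)
  also have "\<dots> = (real n - 1) * ratio\<^sup>2 / (2 * R)"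
    using n_minus_1_pos R_pos by (simp add: divide_simps power2_eq_square) (simp add: algebra_simps)
  finally show ?case
    using n_minus_1_pos by (simp add: seq_a_2 field_simps)
next
  case (step k)
  have "ratio ^ (k - 1) \<le> ratio ^ k"
    using ratio_gt_1 by (intro power_increasing) auto
  then have a_k: "seq_a n \<sigma> R k = ratio ^ (k - 1) / (2 * R)"
    and A_k: "seq_A n \<sigma> R k = (real n - 1) * ratio ^ k / (2 * R)"
    using step by auto
  have "ratio ^ k \<le> sqrt ((real n)\<^sup>2 + 2 * shift * ratio ^ k)"
    using step.prems n_ge_2 ratio_gt_1
    by (subst le_sqrt_iff_le_quadratic_root) (auto simp: B_const_eq)
  then have a_Suc: "seq_a n \<sigma> R (Suc k) = ratio ^ k / (2 * R)"
    using seq_a_Suc_geometric[OF step.hyps(1) a_k A_k] R_pos by (simp add: divide_right_mono)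
  have "seq_A n \<sigma> R (Suc k) = ((real n - 1) * ratio ^ k + ratio ^ k) / (2 * R)"
    by (simp add: seq_A_Suc A_k a_Suc add_divide_distrib)
  also have "\<dots> = real n * ratio ^ k / (2 * R)"
    by (simp add: algebra_simps)
  also have "\<dots> = (real n - 1) * ratio ^ Suc k / (2 * R)"
    using n_minus_1_pos by simp
  finally show ?case
    using a_Suc by simp
qed

lemma seq_a_after_geometric_phase:
  assumes "2 \<le> K" and "ratio ^ (K - 1) \<le> B_const n \<sigma> R" and "B_const n \<sigma> R \<le> ratio ^ K"
  shows "B_const n \<sigma> R / (2 * R) \<le> seq_a n \<sigma> R (Suc K)"
proof -
  have "B_const n \<sigma> R \<le> sqrt ((real n)\<^sup>2 + 2 * shift * ratio ^ K)"
    using assms(3) shift_nonneg unfolding B_const_eq by (intro quadratic_root_le_sqrt)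
  moreover have "seq_a n \<sigma> R (Suc K) =
    min (ratio ^ K / (2 * R)) (sqrt ((real n)\<^sup>2 + 2 * shift * ratio ^ K) / (2 * R))"
    using seq_geometric_phase[OF assms(1,2)] seq_a_Suc_geometric[OF assms(1)] by blast
  ultimately show ?thesis
    using assms(3) R_pos by (simp add: divide_right_mono)
qed

lemma shift_le_B_const: "shift \<le> B_const n \<sigma> R"
  unfolding B_const_eq by simp

lemma quadratic_growth_start:
  assumes "2 \<le> K" and "ratio ^ (K - 1) \<le> B_const n \<sigma> R" and "B_const n \<sigma> R \<le> ratio ^ K"
  shows "c_const n \<sigma> R * (real n)\<^sup>2 \<le> seq_A n \<sigma> R (Suc K)"
    and "growth_const n \<sigma> R * (real n - 1) \<le> seq_a n \<sigma> R (Suc K)"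
proof -
  have "c_const n \<sigma> R * (real n)\<^sup>2 = (real n - 1) * (shift / 2) / (2 * R)"
    using n_ge_2 R_pos by (simp add: c_const_def field_simps power2_eq_square)
  also have "\<dots> \<le> (real n - 1) * ratio ^ K / (2 * R)"
    using shift_nonneg shift_le_B_const assms(3) n_minus_1_pos R_pos
    by (intro divide_right_mono mult_left_mono) auto
  also have "\<dots> = seq_A n \<sigma> R K"
    using seq_geometric_phase[OF assms(1,2)] by simp
  also have "\<dots> \<le> seq_A n \<sigma> R (Suc K)"
    using seq_a_nonneg \<sigma>_nonneg R_pos by (simp add: seq_A_Suc)
  finally show "c_const n \<sigma> R * (real n)\<^sup>2 \<le> seq_A n \<sigma> R (Suc K)" .
  have "growth_const n \<sigma> R * (real n - 1) = (real n - 1) / real n * shift / (2 * R)"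
    using n_ge_2 R_pos by (simp add: growth_const_def field_simps power2_eq_square)
  also have "\<dots> \<le> B_const n \<sigma> R / (2 * R)"
  proof -
    have "(real n - 1) / real n * shift \<le> shift"
      using shift_nonneg n_ge_2 by (intro mult_left_le_one_le) auto
    then show ?thesis
      using shift_le_B_const R_pos by (intro divide_right_mono) auto
  qed
  also have "\<dots> \<le> seq_a n \<sigma> R (Suc K)"
    using seq_a_after_geometric_phase[OF assms] .
  finally show "growth_const n \<sigma> R * (real n - 1) \<le> seq_a n \<sigma> R (Suc K)" .
qed

lemma growth_const_le_sqrt_radicand:
  assumes "0 \<le> m" and "c_const n \<sigma> R * m\<^sup>2 \<le> A"
  shows "growth_const n \<sigma> R * m \<le> sqrt (real n * (real n + \<sigma> * A)) / (2 * R)"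
proof -
  have "(2 * R * (growth_const n \<sigma> R * m))\<^sup>2 = real n * \<sigma> * (c_const n \<sigma> R * m\<^sup>2)"
    using n_ge_2 R_pos by (simp add: growth_const_def c_const_def field_simps power2_eq_square)
  also have "\<dots> \<le> real n * \<sigma> * A"
    using assms(2) \<sigma>_nonneg by (intro mult_left_mono) auto
  also have "\<dots> \<le> real n * (real n + \<sigma> * A)"
    by (simp add: algebra_simps)
  finally have "2 * R * (growth_const n \<sigma> R * m) \<le> sqrt (real n * (real n + \<sigma> * A))"
    by (rule real_le_rsqrt)
  then show ?thesis
    using R_pos by (simp add: field_simps)
qed

lemma c_const_increment_le:
  assumes "real n - 1 \<le> 2 * m"
  shows "c_const n \<sigma> R * (m + 1)\<^sup>2 \<le> c_const n \<sigma> R * m\<^sup>2 + growth_const n \<sigma> R * m"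
proof -
  have "c_const n \<sigma> R * m\<^sup>2 + growth_const n \<sigma> R * m - c_const n \<sigma> R * (m + 1)\<^sup>2
      = (real n - 1) * \<sigma> / (16 * R\<^sup>2 * real n) * (2 * m - (real n - 1))"
    using n_ge_2 R_pos by (simp add: growth_const_def c_const_def field_simps power2_eq_square)
  also have "\<dots> \<ge> 0"
    using assms n_ge_2 \<sigma>_nonneg R_pos by (intro mult_nonneg_nonneg divide_nonneg_pos) auto
  finally show ?thesis
    by simp
qed

lemma quadratic_growth_step:
  assumes "2 \<le> k" and "real n \<le> m"
    and "c_const n \<sigma> R * m\<^sup>2 \<le> seq_A n \<sigma> R k"
    and "growth_const n \<sigma> R * (m - 1) \<le> seq_a n \<sigma> R k"
  shows "c_const n \<sigma> R * (m + 1)\<^sup>2 \<le> seq_A n \<sigma> R (Suc k)"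
    and "growth_const n \<sigma> R * m \<le> seq_a n \<sigma> R (Suc k)"
proof -
  have "growth_const n \<sigma> R * m = \<sigma> / (8 * R\<^sup>2) * ((real n - 1) * m)"
    by (simp add: growth_const_def)
  also have "\<dots> \<le> \<sigma> / (8 * R\<^sup>2) * (real n * (m - 1))"
    using assms(2) \<sigma>_nonneg by (intro mult_left_mono) (auto simp: algebra_simps)
  also have "\<dots> = ratio * (growth_const n \<sigma> R * (m - 1))"
    using n_minus_1_pos by (simp add: growth_const_def)
  also have "\<dots> \<le> ratio * seq_a n \<sigma> R k"
    using assms(4) ratio_gt_1 by (intro mult_left_mono) auto
  finally show a_Suc: "growth_const n \<sigma> R * m \<le> seq_a n \<sigma> R (Suc k)"
    using growth_const_le_sqrt_radicand[OF _ assms(3)] assms(1,2)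
    by (simp add: seq_a_Suc_ratio)
  have "c_const n \<sigma> R * (m + 1)\<^sup>2 \<le> c_const n \<sigma> R * m\<^sup>2 + growth_const n \<sigma> R * m"
    using assms(2) by (intro c_const_increment_le) simp
  also have "\<dots> \<le> seq_A n \<sigma> R (Suc k)"
    using assms(3) a_Suc by (simp add: seq_A_Suc)
  finally show "c_const n \<sigma> R * (m + 1)\<^sup>2 \<le> seq_A n \<sigma> R (Suc k)" .
qed

lemma quadratic_growth:
  assumes "2 \<le> K" and "ratio ^ (K - 1) \<le> B_const n \<sigma> R" and "B_const n \<sigma> R \<le> ratio ^ K"
  shows "c_const n \<sigma> R * (real n + real j)\<^sup>2 \<le> seq_A n \<sigma> R (Suc K + j)"
proof -
  have "c_const n \<sigma> R * (real n + real j)\<^sup>2 \<le> seq_A n \<sigma> R (Suc K + j) \<and>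
        growth_const n \<sigma> R * (real n + real j - 1) \<le> seq_a n \<sigma> R (Suc K + j)"
  proof (induction j)
    case 0
    then show ?case
      using quadratic_growth_start[OF assms] by simp
  next
    case (Suc j)
    then show ?case
      using quadratic_growth_step[of "Suc K + j" "real n + real j"] assms(1)
      by (simp add: add_ac)
  qed
  then show ?thesis ..
qed

lemma B_const_gt_ratio:
  assumes "0 < \<sigma>"
  shows "ratio < B_const n \<sigma> R"
proof -
  have "ratio \<le> real n"
    using n_ge_2 by (simp add: field_simps)
  also have "real n < shift + sqrt (shift\<^sup>2 + (real n)\<^sup>2)"
  proof -
    have "0 < shift"
      using assms n_minus_1_pos R_pos n_ge_2 by (intro divide_pos_pos mult_pos_pos) auto
    then show ?thesis
      using real_sqrt_sum_squares_ge2[of "real n" shift] by linarith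
  qed
  finally show ?thesis
    unfolding B_const_eq .
qed

lemma k0_const_eq_ceiling_log: "k0_const n \<sigma> R = \<lceil>log ratio (B_const n \<sigma> R)\<rceil>"
  using n_minus_1_pos by (simp add: k0_const_def log_def ln_div)

end

theorem proposition3:
  fixes n :: nat and \<sigma> R :: real and k :: nat
  assumes "n \<ge> 2" and "\<sigma> \<ge> 0" and "R > 0"
    and "int k > k0_const n \<sigma> R"
  shows "seq_A n \<sigma> R k \<ge>
           c_const n \<sigma> R * (real_of_int (int k - k0_const n \<sigma> R) + real n - 1)^2"
proof (cases "\<sigma> = 0")
  case True
  then show ?thesis
    using seq_A_nonneg assms(3) by (simp add: c_const_def)
next
  case False
  let ?ratio = "real n / (real n - 1)" and ?B = "B_const n \<sigma> R"
  define K where "K = nat (k0_const n \<sigma> R)"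
  have "1 < ?ratio" and "?ratio < ?B"
    using False assms(1-3) ratio_gt_1 B_const_gt_ratio by auto
  then have k0_ge_2: "2 \<le> k0_const n \<sigma> R" and "?ratio ^ (K - 1) \<le> ?B" and "?B \<le> ?ratio ^ K"
    using ceiling_log_bracket k0_const_eq_ceiling_log[OF assms(1-3)] unfolding K_def
    by (auto intro: less_imp_le)
  moreover have "2 \<le> K"
    using k0_ge_2 unfolding K_def by linarith
  ultimately have growth: "c_const n \<sigma> R * (real n + real j)\<^sup>2 \<le> seq_A n \<sigma> R (Suc K + j)" for j
    using quadratic_growth[OF assms(1-3)] by blast
  have "Suc K \<le> k"
    using assms(4) k0_ge_2 unfolding K_def by linarith
  then obtain j where k: "k = Suc K + j"
    using le_Suc_ex by blast
  have "real_of_int (int k - k0_const n \<sigma> R) + real n - 1 = real n + real j"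
    using k0_ge_2 unfolding k K_def by simp
  then show ?thesis
    using growth[of j] unfolding k by (simp only:)
qed

end
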